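(* Let $M$ be a $d$-disk system and let $\lambda,\lambda'\ge0$ satisfy $\sqrt{2d/(d+1)}\,\lambda'\le\lambda$. Then $$\mathcal{VR}_M(\lambda')\subseteq\mathscr C_M(\lambda)\subseteq\mathcal{VR}_M(\lambda).$$
   Context: A $d$-disk system is a finite collection $M=\{D(c_i;r_i)\}_{i=1}^m$ of closed Euclidean balls in $\mathbb R^d$ with $r_i>0$. For $\lambda\ge0$: $\mathscr C_M(\lambda)$ is the set of nonempty subsets $\sigma\subseteq M$ such that $\bigcap_{D(c_i;r_i)\in\sigma}D(c_i;\lambda r_i)\ne\emptyset$ (generalized Čech complex at scale $\lambda$), and $\mathcal{VR}_M(\lambda)$ is the set of nonempty subsets $\sigma\subseteq M$ such that $D(c_i;\lambda r_i)\cap D(c_j;\lambda r_j)\neq\emptyset$ for all $D(c_i;r_i),D(c_j;r_j)\in\sigma$ (generalized Vietoris–Rips complex at scale $\lambda$). *)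

theory Defs
  imports "HOL-Analysis.Analysis"
begin

text \<open>A disk system in a Euclidean space 'a (of dimension DIM('a) = d) is a finite
  set of (center, radius) pairs with positive radii; the pair (c,r) stands for
  the closed ball cball c r.\<close>

definition disk_system :: "('a::euclidean_space \<times> real) set \<Rightarrow> bool" where
  "disk_system M \<longleftrightarrow> finite M \<and> (\<forall>(c, r) \<in> M. r > 0)"

definition gen_cech :: "('a::euclidean_space \<times> real) set \<Rightarrow> real \<Rightarrow> ('a \<times> real) set set" where
  "gen_cech M lam = {\<sigma>. \<sigma> \<noteq> {} \<and> \<sigma> \<subseteq> M \<and>
      (\<Inter>(c, r) \<in> \<sigma>. cball c (lam * r)) \<noteq> {}}"

definition gen_VR :: "('a::euclidean_space \<times> real) set \<Rightarrow> real \<Rightarrow> ('a \<times> real) set set" where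
  "gen_VR M lam = {\<sigma>. \<sigma> \<noteq> {} \<and> \<sigma> \<subseteq> M \<and>
      (\<forall>(c, r) \<in> \<sigma>. \<forall>(c', r') \<in> \<sigma>. cball c (lam * r) \<inter> cball c' (lam * r') \<noteq> {})}"

end

theory Submission
  imports Defs
begin

text \<open>The inclusion of the Cech complex in the Vietoris--Rips complex is immediate. For the
  other one, take a simplex whose balls pairwise meet at scale \<open>l\<close> and the smallest scale
  \<open>t\<close> at which all its balls share a point \<open>x\<close>. Minimality forces \<open>x\<close> into the convex hull of
  the centres \<open>c\<close> whose scaled balls have \<open>x\<close> on their boundary, \<open>dist c x = t * r\<close>; by
  Caratheodory at most \<open>d + 1\<close> of them suffice. Expanding \<open>\<parallel>\<Sum> w\<^sub>c (c - x)\<parallel>\<^sup>2 = 0\<close> with the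
  pairwise bounds \<open>dist c c' \<le> l (r + r')\<close> and Cauchy--Schwarz then gives
  \<open>t\<^sup>2 n \<le> 2 l\<^sup>2 (n - 1)\<close> for \<open>n \<le> d + 1\<close> active centres, i.e. \<open>t \<le> sqrt (2d/(d+1)) l\<close>.\<close>

definition scaled_inter :: "('a::euclidean_space \<times> real) set \<Rightarrow> real \<Rightarrow> 'a set" where
  "scaled_inter \<sigma> t = (\<Inter>(c, r)\<in>\<sigma>. cball c (t * r))"

lemma mem_scaled_inter: "x \<in> scaled_inter \<sigma> t \<longleftrightarrow> (\<forall>(c, r)\<in>\<sigma>. dist c x \<le> t * r)"
  by (auto simp: scaled_inter_def)

lemma scaled_inter_mono:
  assumes "\<forall>(c, r)\<in>\<sigma>. r > 0" and "t \<le> s"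
  shows "scaled_inter \<sigma> t \<subseteq> scaled_inter \<sigma> s"
  using assms by (fastforce simp: mem_scaled_inter intro: order_trans mult_right_mono)

lemma minimal_scaled_inter_exists:
  fixes \<sigma> :: "('a::euclidean_space \<times> real) set"
  assumes fin: "finite \<sigma>" and ne: "\<sigma> \<noteq> {}" and pos: "\<forall>(c, r)\<in>\<sigma>. r > 0"
  obtains x t where "x \<in> scaled_inter \<sigma> t" and "\<And>y s. y \<in> scaled_inter \<sigma> s \<Longrightarrow> t \<le> s"
proof -
  obtain c0 r0 where p0: "(c0, r0) \<in> \<sigma>" using ne by auto
  with pos have r0: "r0 > 0" by auto
  define s0 where "s0 = (\<Sum>(c, r)\<in>\<sigma>. dist c c0 / r)"
  have "dist c c0 / r \<le> s0" if "(c, r) \<in> \<sigma>" for c r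
    unfolding s0_def using member_le_sum[OF that, of "\<lambda>(c, r). dist c c0 / r"] fin pos by fastforce
  with pos have c0: "c0 \<in> scaled_inter \<sigma> s0"
    by (fastforce simp: mem_scaled_inter divide_le_eq)
  have "s0 \<ge> 0" unfolding s0_def using pos by (intro sum_nonneg) auto
  define F where "F = {p. fst p \<in> scaled_inter \<sigma> (snd p)}"
  define K where "K = (cball c0 (s0 * r0) \<times> {0..s0}) \<inter> F"
  have "F = (\<Inter>q\<in>\<sigma>. {p. dist (fst q) (fst p) \<le> snd p * snd q})"
    unfolding F_def mem_scaled_inter by force
  moreover have "closed {p::'a \<times> real. dist (fst q) (fst p) \<le> snd p * snd q}" for q
    by (intro closed_Collect_le continuous_intros)
  ultimately have "compact K"
    unfolding K_def by (intro compact_Int_closed compact_Times compact_cball compact_Icc) auto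
  moreover have "(c0, s0) \<in> K"
    unfolding K_def F_def using c0 \<open>s0 \<ge> 0\<close> r0 by simp
  ultimately obtain p where p: "p \<in> K" and p_min: "\<And>q. q \<in> K \<Longrightarrow> snd p \<le> snd q"
    using continuous_attains_inf[of K snd] continuous_on_snd[OF continuous_on_id] by fastforce
  show thesis
  proof
    show "fst p \<in> scaled_inter \<sigma> (snd p)" using p unfolding K_def F_def by auto
    fix y s assume y: "y \<in> scaled_inter \<sigma> s"
    show "snd p \<le> s"
    proof (rule ccontr)
      assume "\<not> snd p \<le> s"
      then have "s \<le> s0" using p unfolding K_def by auto
      have y0: "dist c0 y \<le> s * r0" using y p0 by (auto simp: mem_scaled_inter)
      then have "0 \<le> s * r0" using zero_le_dist order_trans by blast
      with r0 have "0 \<le> s" by (simp add: zero_le_mult_iff)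
      moreover have "dist c0 y \<le> s0 * r0"
        using order_trans[OF y0 mult_right_mono[OF \<open>s \<le> s0\<close> less_imp_le[OF r0]]] .
      ultimately have "(y, s) \<in> K"
        unfolding K_def F_def using y \<open>s \<le> s0\<close> by simp
      with p_min \<open>\<not> snd p \<le> s\<close> show False by fastforce
    qed
  qed
qed

lemma scaled_inter_smaller_scale:
  fixes \<sigma> :: "('a::euclidean_space \<times> real) set"
  assumes "finite \<sigma>" and "\<forall>(c, r)\<in>\<sigma>. dist c y < t * r"
  shows "\<exists>s<t. y \<in> scaled_inter \<sigma> s"
proof -
  have "\<forall>q\<in>\<sigma>. \<forall>\<^sub>F s in at_left t. dist (fst q) y < s * snd q"
  proof
    fix q assume "q \<in> \<sigma>"
    have "((\<lambda>s. s * snd q) \<longlongrightarrow> t * snd q) (at_left t)"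
      by (intro tendsto_intros)
    from order_tendstoD(1)[OF this] \<open>q \<in> \<sigma>\<close> assms(2)
    show "\<forall>\<^sub>F s in at_left t. dist (fst q) y < s * snd q" by auto
  qed
  then have "\<forall>\<^sub>F s in at_left t. \<forall>q\<in>\<sigma>. dist (fst q) y < s * snd q"
    by (rule eventually_ball_finite[OF assms(1)])
  moreover have "\<forall>\<^sub>F s in at_left t. s < t"
    by (simp add: eventually_at_filter)
  ultimately have "\<forall>\<^sub>F s in at_left t. s < t \<and> (\<forall>q\<in>\<sigma>. dist (fst q) y < s * snd q)"
    by (simp add: eventually_conj)
  then obtain s where "s < t" "\<forall>q\<in>\<sigma>. dist (fst q) y < s * snd q"
    using eventually_happens'[OF trivial_limit_at_left_real] by blast
  then show ?thesis by (fastforce simp: mem_scaled_inter)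
qed

lemma eventually_dist_add_scaleR_less:
  fixes x c a :: "'a::real_inner"
  assumes "0 < inner a (c - x)"
  shows "\<forall>\<^sub>F e in at_right 0. dist c (x + e *\<^sub>R a) < dist c x"
proof -
  define g where "g = inner a (c - x)"
  have den: "norm a ^ 2 + 1 > 0" by (simp add: add_nonneg_pos)
  have "\<forall>\<^sub>F e in at_right 0. e < 2 * g / (norm a ^ 2 + 1)"
    using assms den unfolding g_def by (intro order_tendstoD(2)[OF tendsto_ident_at]) simp
  with eventually_at_right_less have "\<forall>\<^sub>F e in at_right 0. 0 < e \<and> e < 2 * g / (norm a ^ 2 + 1)"
    by (rule eventually_conj)
  then show ?thesis
  proof (rule eventually_mono)
    fix e :: real assume "0 < e \<and> e < 2 * g / (norm a ^ 2 + 1)"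
    with den have "e * norm a ^ 2 + e < 2 * g" by (simp add: less_divide_eq algebra_simps)
    with \<open>0 < e \<and> _\<close> have e: "0 < e" "e * norm a ^ 2 < 2 * g" by simp_all
    have "dist c (x + e *\<^sub>R a) ^ 2 = norm ((c - x) - e *\<^sub>R a) ^ 2"
      by (simp add: dist_norm algebra_simps)
    also have "\<dots> = dist c x ^ 2 - e * (2 * g - e * norm a ^ 2)"
      unfolding power2_norm_eq_inner g_def dist_norm
      by (simp add: inner_diff_left inner_diff_right inner_commute algebra_simps power2_eq_square)
    also have "\<dots> < dist c x ^ 2" using e by simp
    finally show "dist c (x + e *\<^sub>R a) < dist c x" by (rule power2_less_imp_less) simp
  qed
qed

text \<open>Moving \<open>x\<close> across a hyperplane separating it from the active centres would shrink
  every scaled distance, contradicting minimality of \<open>t\<close>.\<close>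

lemma minimal_scale_point_in_convex_hull:
  fixes \<sigma> :: "('a::euclidean_space \<times> real) set"
  assumes fin: "finite \<sigma>" and x: "x \<in> scaled_inter \<sigma> t"
    and minimal: "\<And>y s. y \<in> scaled_inter \<sigma> s \<Longrightarrow> t \<le> s"
  shows "x \<in> convex hull {c. \<exists>r. (c, r) \<in> \<sigma> \<and> dist c x = t * r}"
    (is "x \<in> convex hull ?A")
proof (rule ccontr)
  assume "x \<notin> convex hull ?A"
  moreover have "finite ?A"
    by (rule finite_subset[OF _ finite_imageI[OF fin, of fst]]) force
  then have "closed (convex hull ?A)"
    by (simp add: compact_imp_closed compact_convex_hull finite_imp_compact)
  ultimately obtain a b where ab: "inner a x < b" "\<forall>y\<in>convex hull ?A. b < inner a y"
    using separating_hyperplane_closed_point[OF convex_convex_hull] by blast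
  have "\<forall>q\<in>\<sigma>. \<forall>\<^sub>F e in at_right 0. dist (fst q) (x + e *\<^sub>R a) < t * snd q"
  proof
    fix q assume q: "q \<in> \<sigma>"
    obtain c r where [simp]: "q = (c, r)" by force
    have "dist c x \<le> t * r" using x q by (auto simp: mem_scaled_inter)
    then consider "dist c x < t * r" | "dist c x = t * r" by linarith
    then show "\<forall>\<^sub>F e in at_right 0. dist (fst q) (x + e *\<^sub>R a) < t * snd q"
    proof cases
      case 1
      have "((\<lambda>e. dist c (x + e *\<^sub>R a)) \<longlongrightarrow> dist c (x + 0 *\<^sub>R a)) (at_right 0)"
        by (intro tendsto_intros)
      from order_tendstoD(2)[OF this] 1 show ?thesis by simp
    next
      case 2
      with q have "c \<in> convex hull ?A" by (intro hull_inc) auto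
      with ab have "0 < inner a (c - x)" by (fastforce simp: inner_diff_right)
      from eventually_dist_add_scaleR_less[OF this] 2 show ?thesis by simp
    qed
  qed
  then have "\<forall>\<^sub>F e in at_right 0. \<forall>q\<in>\<sigma>. dist (fst q) (x + e *\<^sub>R a) < t * snd q"
    by (rule eventually_ball_finite[OF fin])
  then obtain e where "\<forall>q\<in>\<sigma>. dist (fst q) (x + e *\<^sub>R a) < t * snd q"
    using eventually_happens'[OF trivial_limit_at_right_real] by blast
  then obtain s where "s < t" "x + e *\<^sub>R a \<in> scaled_inter \<sigma> s"
    using scaled_inter_smaller_scale[OF fin] by fastforce
  with minimal show False by fastforce
qed

lemma inner_lower_bound:
  fixes u v :: "'a::real_inner"
  assumes "norm u = t * r" "norm v = t * r'" "norm (u - v) \<le> l * (r + r')" "0 \<le> l" "l \<le> t"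
  shows "(t\<^sup>2 - 2 * l\<^sup>2) * (r * r') \<le> inner u v"
proof -
  have "(norm (u - v))\<^sup>2 = (norm u)\<^sup>2 + (norm v)\<^sup>2 - 2 * inner u v"
    by (simp add: power2_norm_eq_inner inner_diff inner_commute)
  then have "(norm (u - v))\<^sup>2 = (t * r)\<^sup>2 + (t * r')\<^sup>2 - 2 * inner u v"
    using assms(1,2) by simp
  moreover have "(norm (u - v))\<^sup>2 \<le> (l * (r + r'))\<^sup>2"
    using assms(3) by (simp add: power_mono)
  moreover have "0 \<le> (t\<^sup>2 - l\<^sup>2) * (r - r')\<^sup>2"
    using assms(4,5) by (simp add: power_mono)
  ultimately show ?thesis by (simp add: power2_eq_square algebra_simps)
qed

text \<open>With \<open>B = \<Sum> w\<^sub>c r\<^sub>c\<close> and \<open>Q = \<Sum> (w\<^sub>c r\<^sub>c)\<^sup>2\<close>, expanding \<open>\<parallel>\<Sum> w\<^sub>c u\<^sub>c\<parallel>\<^sup>2 = 0\<close> gives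
  \<open>(t\<^sup>2 - 2l\<^sup>2) B\<^sup>2 + 2l\<^sup>2 Q \<le> 0\<close>, and Cauchy--Schwarz gives \<open>B\<^sup>2 \<le> n Q\<close>.\<close>

lemma barycentric_configuration_bound:
  fixes u :: "'a \<Rightarrow> 'b::real_inner" and w r :: "'a \<Rightarrow> real"
  assumes fin: "finite T"
    and w0: "\<forall>c\<in>T. 0 \<le> w c" and w1: "sum w T = 1"
    and r0: "\<forall>c\<in>T. 0 < r c"
    and bary: "(\<Sum>c\<in>T. w c *\<^sub>R u c) = 0"
    and norm_u: "\<forall>c\<in>T. norm (u c) = t * r c"
    and close: "\<forall>c\<in>T. \<forall>c'\<in>T. c \<noteq> c' \<longrightarrow> norm (u c - u c') \<le> l * (r c + r c')"
    and "0 \<le> l" and "l \<le> t"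
  shows "t\<^sup>2 * card T \<le> 2 * l\<^sup>2 * (real (card T) - 1)"
proof -
  define B where "B = (\<Sum>c\<in>T. w c * r c)"
  define Q where "Q = (\<Sum>c\<in>T. (w c * r c)\<^sup>2)"
  define g where "g c c' = (t\<^sup>2 - 2 * l\<^sup>2) * (r c * r c') + (if c = c' then 2 * l\<^sup>2 * (r c)\<^sup>2 else 0)"
    for c c'
  have g_le: "g c c' \<le> inner (u c) (u c')" if "c \<in> T" "c' \<in> T" for c c'
  proof (cases "c = c'")
    case True
    have "inner (u c) (u c) = (t * r c)\<^sup>2"
      using norm_u that by (simp add: power2_norm_eq_inner[symmetric])
    with True show ?thesis by (simp add: g_def power2_eq_square algebra_simps)
  next
    case False
    with that norm_u close \<open>0 \<le> l\<close> \<open>l \<le> t\<close> show ?thesis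
      unfolding g_def using inner_lower_bound[of "u c" t "r c" "u c'" "r c'" l] by simp
  qed
  have "0 = inner (\<Sum>c\<in>T. w c *\<^sub>R u c) (\<Sum>c\<in>T. w c *\<^sub>R u c)" using bary by simp
  also have "\<dots> = (\<Sum>c\<in>T. \<Sum>c'\<in>T. w c * w c' * inner (u c) (u c'))"
    by (simp add: inner_sum_left inner_sum_right sum_distrib_left mult.assoc,
        intro sum.cong refl, simp add: inner_commute)
  also have "\<dots> \<ge> (\<Sum>c\<in>T. \<Sum>c'\<in>T. w c * w c' * g c c')"
    by (intro sum_mono mult_left_mono g_le) (use w0 in auto)
  also have "(\<Sum>c\<in>T. \<Sum>c'\<in>T. w c * w c' * g c c') = (t\<^sup>2 - 2 * l\<^sup>2) * B\<^sup>2 + 2 * l\<^sup>2 * Q"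
  proof -
    have "w c * w c' * g c c' = (t\<^sup>2 - 2 * l\<^sup>2) * ((w c * r c) * (w c' * r c')) +
        (if c = c' then 2 * l\<^sup>2 * (w c * r c)\<^sup>2 else 0)" for c c'
      unfolding g_def by (simp add: algebra_simps power2_eq_square)
    then have "(\<Sum>c\<in>T. \<Sum>c'\<in>T. w c * w c' * g c c') =
        (t\<^sup>2 - 2 * l\<^sup>2) * (\<Sum>c\<in>T. \<Sum>c'\<in>T. (w c * r c) * (w c' * r c')) +
        (\<Sum>c\<in>T. \<Sum>c'\<in>T. if c = c' then 2 * l\<^sup>2 * (w c * r c)\<^sup>2 else 0)"
      by (simp add: sum.distrib sum_distrib_left)
    moreover have "(\<Sum>c\<in>T. \<Sum>c'\<in>T. (w c * r c) * (w c' * r c')) = B\<^sup>2"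
      unfolding B_def power2_eq_square by (rule sum_product[symmetric])
    moreover have "(\<Sum>c\<in>T. \<Sum>c'\<in>T. if c = c' then 2 * l\<^sup>2 * (w c * r c)\<^sup>2 else 0) = 2 * l\<^sup>2 * Q"
      unfolding Q_def sum_distrib_left using fin by (simp add: sum.delta)
    ultimately show ?thesis by simp
  qed
  finally have main: "(t\<^sup>2 - 2 * l\<^sup>2) * B\<^sup>2 + 2 * l\<^sup>2 * Q \<le> 0" .
  have CS: "B\<^sup>2 \<le> Q * card T"
    unfolding B_def Q_def by (rule sum_squared_le_sum_of_squares)
  have "\<not> (\<forall>c\<in>T. w c \<le> 0)"
    using sum_nonpos[of T w] w1 by auto
  then obtain c where c: "c \<in> T" "w c > 0" by (auto simp: not_le)
  have "B > 0"
    unfolding B_def using c r0 w0 by (intro sum_pos2[OF fin c(1)]) auto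
  have "t\<^sup>2 * B\<^sup>2 * card T \<le> 2 * l\<^sup>2 * B\<^sup>2 * card T - 2 * l\<^sup>2 * Q * card T"
    using mult_right_mono[OF main, of "real (card T)"] by (simp add: algebra_simps)
  also have "\<dots> \<le> 2 * l\<^sup>2 * B\<^sup>2 * card T - 2 * l\<^sup>2 * B\<^sup>2"
    using mult_left_mono[OF CS, of "2 * l\<^sup>2"] by (simp add: algebra_simps)
  finally have "B\<^sup>2 * (t\<^sup>2 * card T) \<le> B\<^sup>2 * (2 * l\<^sup>2 * (real (card T) - 1))"
    by (simp add: algebra_simps)
  with \<open>B > 0\<close> show ?thesis by simp
qed

lemma le_sqrt_bound_of_card_inequality:
  fixes n d t l :: real
  assumes "1 \<le> n" "n \<le> d + 1" "0 \<le> l" "t\<^sup>2 * n \<le> 2 * l\<^sup>2 * (n - 1)"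
  shows "t \<le> sqrt (2 * d / (d + 1)) * l"
proof -
  have "t\<^sup>2 \<le> 2 * l\<^sup>2 * (1 - 1 / n)"
    using assms(1,4) by (simp add: field_simps)
  also have "\<dots> \<le> 2 * l\<^sup>2 * (1 - 1 / (d + 1))"
    using assms(1,2) by (intro mult_left_mono) (auto simp: frac_le)
  also have "\<dots> = (2 * d / (d + 1)) * l\<^sup>2"
    using assms(1,2) by (simp add: field_simps)
  finally have "t \<le> sqrt ((2 * d / (d + 1)) * l\<^sup>2)" by (rule real_le_rsqrt)
  also have "\<dots> = sqrt (2 * d / (d + 1)) * l"
    using assms(3) by (simp only: real_sqrt_mult real_sqrt_abs abs_of_nonneg)
  finally show ?thesis .
qed

lemma pairwise_close_balls_common_point:
  fixes \<sigma> :: "('a::euclidean_space \<times> real) set"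
  assumes fin: "finite \<sigma>" and ne: "\<sigma> \<noteq> {}" and pos: "\<forall>(c, r)\<in>\<sigma>. r > 0"
    and close: "\<forall>(c, r)\<in>\<sigma>. \<forall>(c', r')\<in>\<sigma>. dist c c' \<le> l * (r + r')" and "0 \<le> l"
  shows "scaled_inter \<sigma> (sqrt (2 * real DIM('a) / (real DIM('a) + 1)) * l) \<noteq> {}"
proof -
  define k where "k = sqrt (2 * real DIM('a) / (real DIM('a) + 1))"
  obtain x t where x: "x \<in> scaled_inter \<sigma> t" and minimal: "\<And>y s. y \<in> scaled_inter \<sigma> s \<Longrightarrow> t \<le> s"
    using minimal_scaled_inter_exists[OF fin ne pos] by blast
  have "t \<le> k * l"
  proof (cases "t \<le> l")
    case True
    have "1 \<le> 2 * real DIM('a) / (real DIM('a) + 1)"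
      using DIM_positive[where 'a='a] by (simp add: le_divide_eq)
    then have "1 \<le> k" unfolding k_def by simp
    then have "l \<le> k * l" using mult_right_mono[OF _ \<open>0 \<le> l\<close>] by fastforce
    with True show ?thesis by linarith
  next
    case False
    then have "t > 0" using \<open>0 \<le> l\<close> by simp
    define A where "A = {c. \<exists>r. (c, r) \<in> \<sigma> \<and> dist c x = t * r}"
    have radius: "\<exists>r. (c, r) \<in> \<sigma> \<and> r > 0 \<and> dist c x / t = r" if "c \<in> A" for c
      using that \<open>t > 0\<close> pos unfolding A_def by auto
    have "x \<in> convex hull A"
      unfolding A_def using minimal_scale_point_in_convex_hull[OF fin x minimal] .
    then obtain S w where S: "finite S" "S \<subseteq> A" "card S \<le> DIM('a) + 1"
      "\<forall>v\<in>S. 0 \<le> w v" "sum w S = 1" "(\<Sum>v\<in>S. w v *\<^sub>R v) = x"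
      unfolding convex_hull_caratheodory by blast
    have "t\<^sup>2 * card S \<le> 2 * l\<^sup>2 * (real (card S) - 1)"
    proof (rule barycentric_configuration_bound[where u="\<lambda>c. c - x" and r="\<lambda>c. dist c x / t"])
      show "\<forall>c\<in>S. 0 < dist c x / t" using radius S(2) by force
      show "(\<Sum>c\<in>S. w c *\<^sub>R (c - x)) = 0"
        using S by (simp add: scaleR_diff_right sum_subtractf scaleR_sum_left[symmetric])
      show "\<forall>c\<in>S. norm (c - x) = t * (dist c x / t)"
        using \<open>t > 0\<close> by (simp add: dist_norm)
      show "\<forall>c\<in>S. \<forall>c'\<in>S. c \<noteq> c' \<longrightarrow> norm (c - x - (c' - x)) \<le> l * (dist c x / t + dist c' x / t)"
      proof (intro ballI impI)
        fix c c' assume "c \<in> S" "c' \<in> S"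
        with radius S(2) obtain r r' where
          "(c, r) \<in> \<sigma>" "dist c x / t = r" "(c', r') \<in> \<sigma>" "dist c' x / t = r'"
          by blast
        moreover from close \<open>(c, r) \<in> \<sigma>\<close> \<open>(c', r') \<in> \<sigma>\<close> have "dist c c' \<le> l * (r + r')"
          by fastforce
        ultimately show "norm (c - x - (c' - x)) \<le> l * (dist c x / t + dist c' x / t)"
          by (simp add: dist_norm)
      qed
    qed (use S \<open>0 \<le> l\<close> False in auto)
    moreover have "S \<noteq> {}" using S(5) by auto
    ultimately show ?thesis
      unfolding k_def using S(1,3) \<open>0 \<le> l\<close>
      by (intro le_sqrt_bound_of_card_inequality[where n="real (card S)"])
        (auto simp: Suc_le_eq card_gt_0_iff)
  qed
  with x scaled_inter_mono[OF pos] show ?thesis unfolding k_def by blast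
qed

theorem mainTheorem4:
  fixes M :: "('a::euclidean_space \<times> real) set" and lam lam' :: real
  assumes "disk_system M"
    and "lam \<ge> 0" and "lam' \<ge> 0"
    and "sqrt (2 * real DIM('a) / (real DIM('a) + 1)) * lam' \<le> lam"
  shows "gen_VR M lam' \<subseteq> gen_cech M lam \<and> gen_cech M lam \<subseteq> gen_VR M lam"
proof
  have finM: "finite M" and posM: "\<forall>(c, r)\<in>M. r > 0"
    using assms(1) unfolding disk_system_def by auto
  show "gen_VR M lam' \<subseteq> gen_cech M lam"
  proof
    fix \<sigma> assume \<sigma>: "\<sigma> \<in> gen_VR M lam'"
    then have "\<sigma> \<noteq> {}" "\<sigma> \<subseteq> M" by (auto simp: gen_VR_def)
    then have fin: "finite \<sigma>" and pos: "\<forall>(c, r)\<in>\<sigma>. r > 0"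
      using finite_subset[OF _ finM] posM by auto
    have "dist c c' \<le> lam' * (r + r')" if "(c, r) \<in> \<sigma>" "(c', r') \<in> \<sigma>" for c r c' r'
    proof -
      from \<sigma> that have "cball c (lam' * r) \<inter> cball c' (lam' * r') \<noteq> {}"
        unfolding gen_VR_def by fastforce
      then have "\<not> dist c c' > lam' * r + lam' * r'" using disjoint_cballI by blast
      then show ?thesis by (simp add: distrib_left)
    qed
    then have "scaled_inter \<sigma> (sqrt (2 * real DIM('a) / (real DIM('a) + 1)) * lam') \<noteq> {}"
      using pairwise_close_balls_common_point[OF fin \<open>\<sigma> \<noteq> {}\<close> pos _ assms(3)] by blast
    then have "scaled_inter \<sigma> lam \<noteq> {}" using scaled_inter_mono[OF pos assms(4)] by blast
    with \<open>\<sigma> \<noteq> {}\<close> \<open>\<sigma> \<subseteq> M\<close> show "\<sigma> \<in> gen_cech M lam"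
      by (simp add: gen_cech_def scaled_inter_def)
  qed
  show "gen_cech M lam \<subseteq> gen_VR M lam"
  proof
    fix \<sigma> assume "\<sigma> \<in> gen_cech M lam"
    then obtain y where "y \<in> scaled_inter \<sigma> lam" and "\<sigma> \<noteq> {}" "\<sigma> \<subseteq> M"
      unfolding gen_cech_def scaled_inter_def by blast
    then show "\<sigma> \<in> gen_VR M lam"
      unfolding gen_VR_def scaled_inter_def by fastforce
  qed
qed

end
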